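(* Consider the partial-block protocol described in the context, on a finite set of agents $A$ with a connected undirected connectivity graph $G=(A,E)$ and block length $L$. If at some epoch $t$ a deadlock occurs, i.e. $D(i)$ holds for every $i\in A$, then all partial blocks have the same size: $|pb_i^{(t)}|=|pb_j^{(t)}|$ for all $i,j\in A$.
   Context: Let $A$ be a finite set of agents (agent IDs) and $G=(A,E)$ a connected undirected graph; $\Gamma_i$ denotes the set of neighbors of $i$. Fix an integer $L\ge 1$ (block length). Each agent $i$ maintains a partial block $pb_i\subseteq A$ (a set of agent IDs). The system runs in epochs $t=0,1,2,\dots$; $pb_i^{(t)}$ is agent $i$'s partial block at the start of epoch $t$. In each epoch: (C1) every agent $i$ with $i\notin pb_i$ adds $i$ to $pb_i$; (C2) every agent $i$ sends its $pb_i$ to every neighbor $j\in\Gamma_i$. When an agent $i$ receives a partial block $P$ (from a neighbor or via a direct message) it applies the rule: (R1) if $|P\setminus\{i\}|>|pb_i\setminus\{i\}|$, agent $i$ sets $pb_i:=P$; (R2) otherwise, if $|P\setminus\{i\}|=|pb_i\setminus\{i\}|$ and $P\neq pb_i$, agent $i$ sends its current $pb_i$ directly to every agent in $P\setminus pb_i$, each of which processes it by the same rule; (R3) otherwise the received block is discarded. All received partial blocks are assumed to pass all validity and similarity checks. For an agent $i$ and epoch $t$, the predicate $D(i)$ means: $pb_i^{(t)}=pb_i^{(t+1)}$ and $|pb_i^{(t)}|<L$. A deadlock at epoch $t$ means that $D(i)$ holds for all $i\in A$. *)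

theory Defs
  imports Main "HOL-Library.Multiset"
begin

definition nbrs :: "'a set \<Rightarrow> ('a \<Rightarrow> 'a \<Rightarrow> bool) \<Rightarrow> 'a \<Rightarrow> 'a set" where
  "nbrs A E i = {j \<in> A. E i j}"

definition connected_graph :: "'a set \<Rightarrow> ('a \<Rightarrow> 'a \<Rightarrow> bool) \<Rightarrow> bool" where
  "connected_graph A E \<longleftrightarrow>
     finite A \<and> A \<noteq> {} \<and>
     (\<forall>i j. E i j \<longrightarrow> i \<in> A \<and> j \<in> A) \<and>
     (\<forall>i j. E i j \<longrightarrow> E j i) \<and>
     (\<forall>i. \<not> E i i) \<and>
     (\<forall>i\<in>A. \<forall>j\<in>A. E\<^sup>*\<^sup>* i j)"

definition add_self :: "'a set \<Rightarrow> ('a \<Rightarrow> 'a set) \<Rightarrow> ('a \<Rightarrow> 'a set)" where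
  "add_self A pb = (\<lambda>i. if i \<in> A then insert i (pb i) else pb i)"

text \<open>Step (C2): every agent sends its partial block to every neighbour.
  A message is a pair (recipient, block).\<close>
definition initial_msgs :: "'a set \<Rightarrow> ('a \<Rightarrow> 'a \<Rightarrow> bool) \<Rightarrow> ('a \<Rightarrow> 'a set)
     \<Rightarrow> ('a \<times> 'a set) multiset" where
  "initial_msgs A E pb = (\<Sum>i\<in>A. \<Sum>j\<in>nbrs A E i. {#(j, pb i)#})"

definition receive :: "'a \<Rightarrow> 'a set \<Rightarrow> ('a \<Rightarrow> 'a set)
     \<Rightarrow> ('a \<Rightarrow> 'a set) \<times> ('a \<times> 'a set) multiset" where
  "receive i P pb =
     (if card (P - {i}) > card (pb i - {i}) then (pb(i := P), {#})
      else if card (P - {i}) = card (pb i - {i}) \<and> P \<noteq> pb i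
        then (pb, mset_set ((\<lambda>k. (k, pb i)) ` (P - pb i)))
      else (pb, {#}))"

inductive deliver :: "('a \<Rightarrow> 'a set) \<times> ('a \<times> 'a set) multiset
     \<Rightarrow> ('a \<Rightarrow> 'a set) \<times> ('a \<times> 'a set) multiset \<Rightarrow> bool" where
  "(i, P) \<in># M \<Longrightarrow> receive i P pb = (pb', N) \<Longrightarrow>
     deliver (pb, M) (pb', (M - {#(i, P)#}) + N)"

definition epoch :: "'a set \<Rightarrow> ('a \<Rightarrow> 'a \<Rightarrow> bool) \<Rightarrow> ('a \<Rightarrow> 'a set)
     \<Rightarrow> ('a \<Rightarrow> 'a set) \<Rightarrow> bool" where
  "epoch A E pb pb' \<longleftrightarrow>
     deliver\<^sup>*\<^sup>* (add_self A pb, initial_msgs A E (add_self A pb)) (pb', {#})"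

definition D :: "nat \<Rightarrow> (nat \<Rightarrow> 'a \<Rightarrow> 'a set) \<Rightarrow> nat \<Rightarrow> 'a \<Rightarrow> bool" where
  "D L pb t i \<longleftrightarrow> pb t i = pb (Suc t) i \<and> card (pb t i) < L"

definition deadlock :: "'a set \<Rightarrow> nat \<Rightarrow> (nat \<Rightarrow> 'a \<Rightarrow> 'a set) \<Rightarrow> nat \<Rightarrow> bool" where
  "deadlock A L pb t \<longleftrightarrow> (\<forall>i\<in>A. D L pb t i)"

end

theory Submission
  imports Defs
begin

text \<open>
  Call \<open>card (pb k - {k})\<close> the weight of agent \<open>k\<close>. While messages are delivered the
  weight of every agent never decreases, and its block only changes when its weight
  strictly increases; moreover, once a message \<open>(j, S)\<close> has been delivered, the weight of
  \<open>j\<close> is at least \<open>card (S - {j})\<close>. In a deadlocked epoch no block changes, so adding the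
  agent itself in step C1 must have been a no-op and, for every edge \<open>i\<close>--\<open>j\<close>, the message
  carrying \<open>pb i\<close> to \<open>j\<close> gives \<open>card (pb i - {j}) \<le> card (pb j - {j})\<close>. Together with the
  symmetric inequality this forces \<open>card (pb i) = card (pb j)\<close> along every edge, and
  connectivity spreads the equality to all agents.
\<close>

lemma receive_block_grows:
  assumes "receive i P pb = (pb', N)"
  shows "(pb' = pb(i := P) \<and> card (pb i - {i}) < card (P - {i})) \<or>
         (pb' = pb \<and> card (P - {i}) \<le> card (pb i - {i}))"
  using assms unfolding receive_def by (auto split: if_splits)

lemma deliver_block_grows:
  assumes "deliver st st'"
  shows "fst st' k = fst st k \<or> card (fst st k - {k}) < card (fst st' k - {k})"
  using assms
proof cases
  case (1 i P M pb pb' N)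
  then show ?thesis using receive_block_grows[OF 1(4)] by (cases "k = i") auto
qed

lemma deliver_steps_block_grows:
  assumes "deliver\<^sup>*\<^sup>* st st'"
  shows "fst st' k = fst st k \<or> card (fst st k - {k}) < card (fst st' k - {k})"
  using assms
  by (induction rule: rtranclp_induct) (auto dest: deliver_block_grows[of _ _ k])

lemma deliver_steps_weight_mono:
  "deliver\<^sup>*\<^sup>* st st' \<Longrightarrow> card (fst st k - {k}) \<le> card (fst st' k - {k})"
  using deliver_steps_block_grows[of st st' k] by fastforce

lemma delivered_msg_weight_le:
  assumes "deliver\<^sup>*\<^sup>* st st'" "(j, S) \<in># snd st" "(j, S) \<notin># snd st'"
  shows "card (S - {j}) \<le> card (fst st' j - {j})"
  using assms
proof (induction rule: converse_rtranclp_induct)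
  case base
  then show ?case by simp
next
  case (step st st'')
  show ?case
  proof (cases "(j, S) \<in># snd st''")
    case True
    then show ?thesis using step.IH step.prems(2) by blast
  next
    case False
    from step.hyps(1) show ?thesis
    proof cases
      case (1 i P M pb pb' N)
      with False step.prems(1) have "(i, P) = (j, S)"
        by (auto simp: in_diff_count split: if_splits)
      then have "card (S - {j}) \<le> card (fst st'' j - {j})"
        using receive_block_grows[OF 1(4)] 1(2) by auto
      also have "\<dots> \<le> card (fst st' j - {j})"
        using deliver_steps_weight_mono[OF step.hyps(2)] .
      finally show ?thesis .
    qed
  qed
qed

lemma initial_msgs_edge:
  assumes "finite A" "i \<in> A" "j \<in> A" "E i j"
  shows "(j, pb i) \<in># initial_msgs A E pb"
proof -
  have "finite (nbrs A E i')" for i'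
    using assms(1) unfolding nbrs_def by auto
  then show ?thesis
    using assms unfolding initial_msgs_def
    by (simp only: set_mset_sum[OF assms(1)] set_mset_sum) (auto simp: nbrs_def)
qed

lemma epoch_fixed_self_mem:
  assumes "epoch A E pb pb'" "i \<in> A" "pb' i = pb i"
  shows "i \<in> pb i"
proof -
  have "pb' i = add_self A pb i \<or>
        card (add_self A pb i - {i}) < card (pb' i - {i})"
    using deliver_steps_block_grows assms(1) unfolding epoch_def by fastforce
  moreover have "add_self A pb i - {i} = pb' i - {i}"
    using assms(2,3) by (auto simp: add_self_def)
  ultimately have "pb' i = insert i (pb i)"
    using assms(2) by (auto simp: add_self_def)
  then show ?thesis
    using assms(3) by auto
qed

lemma epoch_fixed_edge_weight_le:
  assumes "finite A" "epoch A E pb pb'" "i \<in> A" "j \<in> A" "E i j"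
    and "pb' i = pb i" "pb' j = pb j"
  shows "card (pb i - {j}) \<le> card (pb j - {j})"
proof -
  have own: "add_self A pb k = pb k" if "k \<in> A" "pb' k = pb k" for k
    using epoch_fixed_self_mem[OF assms(2) that] that(1) by (auto simp: add_self_def)
  have "(j, add_self A pb i) \<in># initial_msgs A E (add_self A pb)"
    using assms(1,3-5) by (rule initial_msgs_edge)
  then have "card (add_self A pb i - {j}) \<le> card (pb' j - {j})"
    using delivered_msg_weight_le assms(2) unfolding epoch_def by fastforce
  then show ?thesis
    using own[OF assms(3,6)] assms(7) by simp
qed

text \<open>No finiteness is needed: an infinite block has \<open>card\<close> 0, which the two bounds
  force on the other block as well. This is why \<open>lemma3\<close> never uses that blocks consist
  of agents.\<close>
lemma card_eq_if_cross_remove_le: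
  assumes "i \<in> X" "j \<in> Y" "i \<noteq> j"
    and "card (X - {j}) \<le> card (Y - {j})" "card (Y - {i}) \<le> card (X - {i})"
  shows "card X = card Y"
proof (cases "finite X"; cases "finite Y")
  assume "finite X" "finite Y"
  then have "card (X - {i}) = card X - 1" "card (Y - {j}) = card Y - 1"
    and "card X - 1 \<le> card (X - {j})" "card Y - 1 \<le> card (Y - {i})"
    and "card X > 0" "card Y > 0"
    using assms(1,2) diff_card_le_card_Diff[of "{_}"] by (auto simp: card_gt_0_iff)
  then show ?thesis
    using assms(4,5) by linarith
next
  assume "finite X" "infinite Y"
  then have "X - {j} = {}"
    using assms(4) by simp
  then show ?thesis using assms(1,3) by blast
next
  assume "infinite X" "finite Y"
  then have "Y - {i} = {}"
    using assms(5) by simp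
  then show ?thesis using assms(2,3) by blast
next
  assume "infinite X" "infinite Y"
  then show ?thesis by simp
qed

lemma rtranclp_edge_invariant:
  assumes "R\<^sup>*\<^sup>* x y" "\<And>u v. R u v \<Longrightarrow> f u = f v"
  shows "f x = f y"
  using assms by (induction rule: rtranclp_induct) auto

theorem lemma3:
  fixes A :: "'a set" and E :: "'a \<Rightarrow> 'a \<Rightarrow> bool"
    and L :: nat and pb :: "nat \<Rightarrow> 'a \<Rightarrow> 'a set" and t :: nat
  assumes "connected_graph A E"
    and "L \<ge> 1"
    and "\<forall>i\<in>A. pb 0 i \<subseteq> A"
    and "\<forall>s. epoch A E (pb s) (pb (Suc s))"
    and "deadlock A L pb t"
  shows "\<forall>i\<in>A. \<forall>j\<in>A. card (pb t i) = card (pb t j)"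
proof -
  note graph = assms(1)[unfolded connected_graph_def]
  have ep: "epoch A E (pb t) (pb (Suc t))"
    using assms(4) by blast
  have fixed: "pb (Suc t) i = pb t i" if "i \<in> A" for i
    using assms(5) that unfolding deadlock_def D_def by auto
  have edge: "card (pb t i) = card (pb t j)" if "E i j" for i j
  proof (rule card_eq_if_cross_remove_le)
    have ij: "i \<in> A" "j \<in> A" "E j i" "i \<noteq> j"
      using graph that by metis+
    show "i \<in> pb t i" "j \<in> pb t j"
      using epoch_fixed_self_mem[OF ep] fixed ij by auto
    show "i \<noteq> j" by (fact ij(4))
    show "card (pb t i - {j}) \<le> card (pb t j - {j})"
         "card (pb t j - {i}) \<le> card (pb t i - {i})"
      using epoch_fixed_edge_weight_le[OF _ ep] fixed graph ij that by auto
  qed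
  show ?thesis
    using rtranclp_edge_invariant[where f = "\<lambda>i. card (pb t i)"] edge graph by metis
qed

end
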